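(* Let $X\in\mathbb{R}^{n\times p}$ with $n>p$ and $X^TX$ invertible, let $Y=({\bf y}_1,\dots,{\bf y}_r)\in\mathbb{R}^{n\times r}$ with columns ${\bf y}_c\in\mathbb{R}^n$, let $D=(D_1,\ldots,D_Q)$ be a fixed partition of $\{1,\ldots,r\}$, and let $\gamma\ge 0$ be fixed. Let $\dot{\boldsymbol\beta}_c=(X^TX)^{-1}X^T{\bf y}_c$ be the ordinary least squares estimate for response $c$, $c=1,\dots,r$, and let $\bar B=(\bar{\boldsymbol\beta}_1,\ldots,\bar{\boldsymbol\beta}_r)\in\mathbb{R}^{p\times r}$ be the minimizer over $B=(\boldsymbol\beta_1,\dots,\boldsymbol\beta_r)\in\mathbb{R}^{p\times r}$ of $$\frac{1}{2n}\sum_{i=1}^n\sum_{c=1}^r (y_{ic}-{\bf x}_i^T\boldsymbol\beta_c)^2+\frac{\gamma}{2n}\sum_{q=1}^Q\frac{1}{|D_q|}\sum_{l,m\in D_q}\|X(\boldsymbol\beta_l-\boldsymbol\beta_m)\|_2^2$$ (this is the objective with lasso parameter $\delta=0$). Then for every $q$ and every $l\in D_q$, $$\bar{\boldsymbol\beta}_l=\dot{\boldsymbol\beta}_l+\frac{2\gamma}{(1+2\gamma)|D_q|}\sum_{c\in D_q,\,c\neq l}(\dot{\boldsymbol\beta}_c-\dot{\boldsymbol\beta}_l).$$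
   Context: ${\bf x}_i^T$ denotes the $i$th row of $X$ and $y_{ic}$ the $(i,c)$ entry of $Y$. The inner sum $\sum_{l,m\in D_q}$ runs over all ordered pairs $(l,m)$ with $l,m\in D_q$. Standing assumptions of the paper: the columns of $Y$ and of $X$ are centered ($\sum_i y_{ik}=0$, $\sum_i x_{ij}=0$) and $\sum_i x_{ij}^2\le n$. $|D_q|$ is the cardinality of $D_q$. *)

theory Defs
  imports "HOL-Analysis.Analysis" "HOL-Library.Disjoint_Sets"
begin

text \<open>Design matrix X : n x p (real^'p^'n), responses Y : n x r (real^'r^'n),
  coefficient matrices B : p x r (real^'r^'p); column c of B is beta_c.\<close>

definition ols_est :: "real^'p^'n \<Rightarrow> real^'r^'n \<Rightarrow> 'r \<Rightarrow> real^'p" where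
  "ols_est X Y c = matrix_inv (transpose X ** X) *v (transpose X *v column c Y)"

definition grouped_objective ::
  "real^'p^'n \<Rightarrow> real^'r^'n \<Rightarrow> 'r set set \<Rightarrow> real \<Rightarrow> real^'r^'p \<Rightarrow> real" where
  "grouped_objective X Y D \<gamma> B =
     1 / (2 * real CARD('n)) *
       (\<Sum>i\<in>UNIV. \<Sum>c\<in>UNIV. (Y $ i $ c - (X $ i) \<bullet> column c B)\<^sup>2)
   + \<gamma> / (2 * real CARD('n)) *
       (\<Sum>Dq\<in>D. 1 / real (card Dq) *
          (\<Sum>l\<in>Dq. \<Sum>m\<in>Dq. (norm (X *v (column l B - column m B)))\<^sup>2))"

end

theory Submission
  imports Defs
begin

text \<open>Moving only the column \<open>\<beta>\<^sub>l\<close> of the minimiser along a direction \<open>h\<close> changes the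
  objective by a quadratic polynomial in the step size with nonnegative leading coefficient,
  so its linear coefficient vanishes for every \<open>h\<close>. This gives the normal equations
  \<open>X\<^sup>T X z\<^sub>l = X\<^sup>T y\<^sub>l\<close> for \<open>z\<^sub>l = \<beta>\<^sub>l + (2\<gamma>/|D\<^sub>q|) \<Sum>\<^sub>m\<^sub>\<in>\<^sub>D\<^sub>q (\<beta>\<^sub>l - \<beta>\<^sub>m)\<close>, so \<open>z\<^sub>l\<close> is the
  OLS estimate of response \<open>l\<close>. Summing over the group shows that the \<open>\<beta>\<^sub>l\<close> and the OLS
  estimates have the same group sum, and solving the resulting linear system within the
  group yields the closed form.\<close>

lemma quadratic_min_at_zero_linear_coeff:
  fixes a b c :: real
  assumes "\<And>t. a \<le> a + t * b + t\<^sup>2 * c"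
  shows "b = 0"
proof (rule ccontr)
  assume "b \<noteq> 0"
  define k where "k = \<bar>c\<bar> + 1"
  have "k > 0" unfolding k_def by simp
  define t where "t = - b / (2 * k)"
  have "0 \<le> t * b + t\<^sup>2 * (k - 1)"
    using assms[of t] unfolding k_def by (smt (verit) abs_ge_self mult_left_mono zero_le_power2)
  also have "\<dots> = - b\<^sup>2 * (k + 1) / (4 * k\<^sup>2)"
    unfolding t_def using \<open>k > 0\<close> by (simp add: field_simps power2_eq_square)
  also have "\<dots> < 0"
    using \<open>b \<noteq> 0\<close> \<open>k > 0\<close> by (simp add: divide_neg_pos)
  finally show False by simp
qed

lemma power2_norm_add_scaleR:
  fixes a b :: "'a::real_inner"
  shows "(norm (a + t *\<^sub>R b))\<^sup>2 = (norm a)\<^sup>2 + t * (2 * (a \<bullet> b)) + t\<^sup>2 * (norm b)\<^sup>2"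
  unfolding power2_norm_eq_inner
  by (simp add: inner_commute algebra_simps power2_eq_square)

definition single_column :: "'r \<Rightarrow> real^'p \<Rightarrow> real^'r^'p" where
  "single_column l h = (\<chi> i j. if j = l then h $ i else 0)"

lemma column_add_single_column:
  "column c (B + t *\<^sub>R single_column l h) = (if c = l then column c B + t *\<^sub>R h else column c B)"
  by (simp add: column_def single_column_def vec_eq_iff)

definition fit_loss :: "real^'p^'n \<Rightarrow> real^'r^'n \<Rightarrow> real^'r^'p \<Rightarrow> real" where
  "fit_loss X Y B = (\<Sum>c\<in>UNIV. (norm (column c Y - X *v column c B))\<^sup>2)"

definition pair_penalty :: "real^'p^'n \<Rightarrow> 'r set \<Rightarrow> real^'r^'p \<Rightarrow> real" where
  "pair_penalty X S B = (\<Sum>l\<in>S. \<Sum>m\<in>S. (norm (X *v (column l B - column m B)))\<^sup>2)"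

lemma grouped_objective_eq:
  fixes X :: "real^'p^'n" and Y :: "real^'r^'n"
  shows "grouped_objective X Y D \<gamma> B =
     fit_loss X Y B / (2 * real CARD('n))
   + \<gamma> / (2 * real CARD('n)) * (\<Sum>Dq\<in>D. pair_penalty X Dq B / real (card Dq))"
proof -
  have "(\<Sum>i\<in>UNIV. \<Sum>c\<in>UNIV. (Y $ i $ c - X $ i \<bullet> column c B)\<^sup>2) = fit_loss X Y B"
    unfolding fit_loss_def power2_norm_eq_inner inner_vec_def
    by (subst sum.swap) (simp add: matrix_vector_mult_def inner_vec_def column_def power2_eq_square mult.commute)
  then show ?thesis
    unfolding grouped_objective_def pair_penalty_def by simp
qed

lemma fit_loss_add_single_column:
  "fit_loss X Y (B + t *\<^sub>R single_column l h) =
     fit_loss X Y B + t * (2 * ((X *v column l B - column l Y) \<bullet> (X *v h))) + t\<^sup>2 * (norm (X *v h))\<^sup>2"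
proof -
  have "column l Y - X *v (column l B + t *\<^sub>R h) = (column l Y - X *v column l B) + t *\<^sub>R (- (X *v h))"
    by (simp add: algebra_simps)
  then have "(norm (column l Y - X *v (column l B + t *\<^sub>R h)))\<^sup>2 =
      (norm (column l Y - X *v column l B))\<^sup>2 + t * (2 * ((X *v column l B - column l Y) \<bullet> (X *v h)))
      + t\<^sup>2 * (norm (X *v h))\<^sup>2"
    by (simp only: power2_norm_add_scaleR norm_minus_cancel inner_minus_right flip: inner_minus_left) simp
  then show ?thesis
    unfolding fit_loss_def column_add_single_column
    by (simp add: sum.remove[of UNIV l] if_distrib cong: if_cong)
qed

lemma pair_penalty_insert:
  assumes "finite S" and "l \<notin> S"
  shows "pair_penalty X (insert l S) B =
           pair_penalty X S B + 2 * (\<Sum>m\<in>S. (norm (X *v (column l B - column m B)))\<^sup>2)"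
proof -
  have sym: "norm (X *v (column m B - column l B)) = norm (X *v (column l B - column m B))" for m
    by (metis matrix_vector_mult_diff_distrib norm_minus_commute)
  show ?thesis
    using assms unfolding pair_penalty_def
    by (simp add: sum.distrib sym)
qed

lemma pair_penalty_add_single_column_notin:
  assumes "l \<notin> S"
  shows "pair_penalty X S (B + t *\<^sub>R single_column l h) = pair_penalty X S B"
  using assms unfolding pair_penalty_def column_add_single_column
  by (intro sum.cong) auto

lemma pair_penalty_add_single_column:
  assumes "finite S" and "l \<notin> S"
  shows "pair_penalty X (insert l S) (B + t *\<^sub>R single_column l h) =
           pair_penalty X (insert l S) B
           + t * (4 * (\<Sum>m\<in>S. (X *v (column l B - column m B)) \<bullet> (X *v h)))
           + t\<^sup>2 * (2 * real (card S) * (norm (X *v h))\<^sup>2)"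
proof -
  let ?B' = "B + t *\<^sub>R single_column l h"
  have "(norm (X *v (column l ?B' - column m ?B')))\<^sup>2 =
          (norm (X *v (column l B - column m B)))\<^sup>2
          + t * (2 * ((X *v (column l B - column m B)) \<bullet> (X *v h))) + t\<^sup>2 * (norm (X *v h))\<^sup>2"
    if "m \<in> S" for m
  proof -
    have "X *v (column l ?B' - column m ?B') = X *v (column l B - column m B) + t *\<^sub>R (X *v h)"
      using that assms(2) by (auto simp: column_add_single_column algebra_simps)
    then show ?thesis by (simp only: power2_norm_add_scaleR)
  qed
  then have "(\<Sum>m\<in>S. (norm (X *v (column l ?B' - column m ?B')))\<^sup>2) =
      (\<Sum>m\<in>S. (norm (X *v (column l B - column m B)))\<^sup>2)
      + t * (2 * (\<Sum>m\<in>S. (X *v (column l B - column m B)) \<bullet> (X *v h)))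
      + t\<^sup>2 * (real (card S) * (norm (X *v h))\<^sup>2)"
    by (simp add: sum.distrib sum_distrib_left)
  then show ?thesis
    using assms by (simp add: pair_penalty_insert pair_penalty_add_single_column_notin algebra_simps)
qed

lemma grouped_objective_add_single_column:
  fixes X :: "real^'p^'n" and Y :: "real^'r^'n" and B :: "real^'r^'p"
  assumes part: "partition_on UNIV D" and gamma: "\<gamma> \<ge> 0" and Dq: "Dq \<in> D" and l: "l \<in> Dq"
  defines "z \<equiv> column l B + (2 * \<gamma> / real (card Dq)) *\<^sub>R (\<Sum>m\<in>Dq. column l B - column m B)"
  shows "\<exists>Q\<ge>0. \<forall>t. grouped_objective X Y D \<gamma> (B + t *\<^sub>R single_column l h) =
           grouped_objective X Y D \<gamma> B + t * ((X *v z - column l Y) \<bullet> (X *v h) / real CARD('n)) + t\<^sup>2 * Q"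
proof -
  let ?B' = "\<lambda>t. B + t *\<^sub>R single_column l h"
  let ?n = "real CARD('n)" and ?k = "real (card Dq)" and ?w = "X *v h"
  define S where "S = Dq - {l}"
  have S: "finite S" "l \<notin> S" "Dq = insert l S"
    using l by (auto simp: S_def)
  have "card Dq \<noteq> 0"
    using S by auto
  have other_groups: "l \<notin> Dq'" if "Dq' \<in> D - {Dq}" for Dq'
    using that partition_onD2[OF part] Dq l by (auto simp: disjoint_def)
  have finite_D: "finite D"
    by (rule finite_subset[of D "Pow UNIV"]) auto
  have penalty: "(\<Sum>Dq'\<in>D. pair_penalty X Dq' (?B' t) / real (card Dq')) =
      (\<Sum>Dq'\<in>D. pair_penalty X Dq' B / real (card Dq'))
      + (pair_penalty X Dq (?B' t) - pair_penalty X Dq B) / ?k" for t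
  proof -
    have "(\<Sum>Dq'\<in>D - {Dq}. pair_penalty X Dq' (?B' t) / real (card Dq')) =
          (\<Sum>Dq'\<in>D - {Dq}. pair_penalty X Dq' B / real (card Dq'))"
      using other_groups by (simp add: pair_penalty_add_single_column_notin)
    then show ?thesis
      using finite_D Dq by (simp add: sum.remove diff_divide_distrib)
  qed
  define L where "L = (X *v (\<Sum>m\<in>Dq. column l B - column m B)) \<bullet> ?w"
  have group_Dq: "pair_penalty X Dq (?B' t) =
      pair_penalty X Dq B + t * (4 * L) + t\<^sup>2 * (2 * real (card S) * (norm ?w)\<^sup>2)" for t
  proof -
    have "(\<Sum>m\<in>S. (X *v (column l B - column m B)) \<bullet> ?w) = L"
      using S by (simp add: L_def linear_sum[OF matrix_vector_mul_linear] inner_sum_left)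
    then show ?thesis
      using pair_penalty_add_single_column[OF S(1,2), of X B t h] S(3) by simp
  qed
  have linear_coeff: "(X *v z - column l Y) \<bullet> ?w = (X *v column l B - column l Y) \<bullet> ?w + 2 * \<gamma> / ?k * L"
    by (simp add: z_def L_def inner_diff_left inner_add_left matrix_vector_right_distrib matrix_vector_mult_scaleR)
  define Q where "Q = (1 + 2 * \<gamma> * real (card S) / ?k) * (norm ?w)\<^sup>2 / (2 * ?n)"
  have "Q \<ge> 0"
    unfolding Q_def using gamma by simp
  moreover have "grouped_objective X Y D \<gamma> (?B' t) =
      grouped_objective X Y D \<gamma> B + t * ((X *v z - column l Y) \<bullet> ?w / ?n) + t\<^sup>2 * Q" for t
  proof -
    let ?a = "(X *v column l B - column l Y) \<bullet> ?w" and ?s = "real (card S)"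
    have "grouped_objective X Y D \<gamma> (?B' t) = grouped_objective X Y D \<gamma> B
        + (t * (2 * ?a) + t\<^sup>2 * (norm ?w)\<^sup>2) / (2 * ?n)
        + \<gamma> / (2 * ?n) * ((t * (4 * L) + t\<^sup>2 * (2 * ?s * (norm ?w)\<^sup>2)) / ?k)"
      unfolding grouped_objective_eq penalty fit_loss_add_single_column group_Dq
      by (simp add: algebra_simps add_divide_distrib diff_divide_distrib)
    also have "\<dots> = grouped_objective X Y D \<gamma> B + t * ((X *v z - column l Y) \<bullet> ?w / ?n) + t\<^sup>2 * Q"
      unfolding linear_coeff Q_def using \<open>card Dq \<noteq> 0\<close> by (simp add: field_simps)
    finally show ?thesis .
  qed
  ultimately show ?thesis by blast
qed

lemma grouped_minimizer_normal_equation: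
  fixes X :: "real^'p^'n" and Y :: "real^'r^'n" and Bbar :: "real^'r^'p"
  assumes part: "partition_on UNIV D" and gamma: "\<gamma> \<ge> 0"
    and minimizer: "\<And>B. grouped_objective X Y D \<gamma> Bbar \<le> grouped_objective X Y D \<gamma> B"
    and Dq: "Dq \<in> D" and l: "l \<in> Dq"
  shows "transpose X *v (X *v (column l Bbar + (2 * \<gamma> / real (card Dq)) *\<^sub>R
           (\<Sum>m\<in>Dq. column l Bbar - column m Bbar)) - column l Y) = 0"
    (is "transpose X *v ?v = 0")
proof -
  let ?H = "single_column l (transpose X *v ?v)"
  obtain Q where expand: "\<And>t. grouped_objective X Y D \<gamma> (Bbar + t *\<^sub>R ?H) =
      grouped_objective X Y D \<gamma> Bbar + t * (?v \<bullet> (X *v (transpose X *v ?v)) / real CARD('n)) + t\<^sup>2 * Q"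
    using grouped_objective_add_single_column[OF part gamma Dq l] by blast
  have "?v \<bullet> (X *v (transpose X *v ?v)) / real CARD('n) = 0"
  proof (rule quadratic_min_at_zero_linear_coeff)
    fix t
    show "grouped_objective X Y D \<gamma> Bbar \<le> grouped_objective X Y D \<gamma> Bbar
        + t * (?v \<bullet> (X *v (transpose X *v ?v)) / real CARD('n)) + t\<^sup>2 * Q"
      using minimizer[of "Bbar + t *\<^sub>R ?H"] by (simp only: expand)
  qed
  then have "(transpose X *v ?v) \<bullet> (transpose X *v ?v) = 0"
    by (simp add: dot_lmul_matrix)
  then show ?thesis by simp
qed

lemma matrix_inv_left:
  fixes A :: "real^'n^'n"
  assumes "invertible A"
  shows "matrix_inv A ** A = mat 1"
  using assms unfolding invertible_def matrix_inv_def by (metis (mono_tags, lifting) someI_ex)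

lemma ols_est_eqI:
  fixes X :: "real^'p^'n" and Y :: "real^'r^'n"
  assumes "invertible (transpose X ** X)" and "transpose X *v (X *v z - column c Y) = 0"
  shows "ols_est X Y c = z"
proof -
  have "(transpose X ** X) *v z = transpose X *v column c Y"
    using assms(2) by (simp add: matrix_vector_mult_diff_distrib matrix_vector_mul_assoc)
  then show ?thesis
    unfolding ols_est_def
    by (metis assms(1) matrix_inv_left matrix_vector_mul_assoc matrix_vector_mul_lid)
qed

lemma shrinkage_system_solution:
  fixes b p :: "'a \<Rightarrow> 'v::real_vector"
  assumes "finite S" and l: "l \<in> S" and gamma: "\<gamma> \<ge> 0"
    and eq: "\<And>l'. l' \<in> S \<Longrightarrow> b l' + (2 * \<gamma> / real (card S)) *\<^sub>R (\<Sum>m\<in>S. b l' - b m) = p l'"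
  shows "b l = p l + (2 * \<gamma> / ((1 + 2 * \<gamma>) * real (card S))) *\<^sub>R (\<Sum>c\<in>S - {l}. p c - p l)"
proof -
  define k where "k = real (card S)"
  define a where "a = 2 * \<gamma> / k"
  have "k > 0" "1 + 2 * \<gamma> > 0"
    using assms(1) l gamma by (auto simp: k_def card_gt_0_iff)
  have "a * k = 2 * \<gamma>"
    using \<open>k > 0\<close> by (simp add: a_def)
  have eq': "(1 + 2 * \<gamma>) *\<^sub>R b l' - a *\<^sub>R sum b S = p l'" if "l' \<in> S" for l'
  proof -
    have "p l' = b l' + a *\<^sub>R (k *\<^sub>R b l' - sum b S)"
      using eq[OF that] by (simp add: a_def k_def sum_subtractf sum_constant_scaleR)
    also have "\<dots> = (1 + 2 * \<gamma>) *\<^sub>R b l' - a *\<^sub>R sum b S"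
      using \<open>a * k = 2 * \<gamma>\<close> by (simp add: scaleR_diff_right scaleR_add_left)
    finally show ?thesis by simp
  qed
  have "sum p S = (\<Sum>l'\<in>S. (1 + 2 * \<gamma>) *\<^sub>R b l' - a *\<^sub>R sum b S)"
    using eq' by simp
  also have "\<dots> = (1 + 2 * \<gamma>) *\<^sub>R sum b S - a *\<^sub>R (k *\<^sub>R sum b S)"
    by (simp add: sum_subtractf scaleR_sum_right sum_constant_scaleR k_def mult.commute)
  also have "\<dots> = sum b S"
    using \<open>a * k = 2 * \<gamma>\<close> by (simp add: scaleR_add_left)
  finally have sums: "sum p S = sum b S" .
  have "(\<Sum>c\<in>S - {l}. p c - p l) = sum p S - k *\<^sub>R p l"
  proof -
    have "(\<Sum>c\<in>S - {l}. p c - p l) = (\<Sum>c\<in>S. p c - p l)"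
      using assms(1) l by (simp add: sum.remove)
    then show ?thesis by (simp add: sum_subtractf sum_constant_scaleR k_def)
  qed
  then have "(1 + 2 * \<gamma>) *\<^sub>R (p l + (a / (1 + 2 * \<gamma>)) *\<^sub>R (\<Sum>c\<in>S - {l}. p c - p l))
      = (1 + 2 * \<gamma>) *\<^sub>R p l + a *\<^sub>R sum p S - (a * k) *\<^sub>R p l"
    using \<open>1 + 2 * \<gamma> > 0\<close> by (simp add: scaleR_add_right scaleR_diff_right)
  also have "\<dots> = (1 + 2 * \<gamma>) *\<^sub>R b l"
    using eq'[OF l] sums \<open>a * k = 2 * \<gamma>\<close> by (simp add: algebra_simps)
  finally show ?thesis
    using \<open>1 + 2 * \<gamma> > 0\<close> by (simp add: a_def k_def mult.commute)
qed

theorem theorem1: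
  fixes X :: "real^'p^'n" and Y :: "real^'r^'n" and D :: "'r set set"
    and \<gamma> :: real and Bbar :: "real^'r^'p"
  assumes n_gt_p: "CARD('n) > CARD('p)"
    and inv: "invertible (transpose X ** X)"
    and Y_centered: "\<And>k. (\<Sum>i\<in>UNIV. Y $ i $ k) = 0"
    and X_centered: "\<And>j. (\<Sum>i\<in>UNIV. X $ i $ j) = 0"
    and X_scaled: "\<And>j. (\<Sum>i\<in>UNIV. (X $ i $ j)\<^sup>2) \<le> real CARD('n)"
    and part: "partition_on UNIV D"
    and gamma: "\<gamma> \<ge> 0"
    and minimizer: "\<And>B. grouped_objective X Y D \<gamma> Bbar \<le> grouped_objective X Y D \<gamma> B"
  shows "\<forall>Dq\<in>D. \<forall>l\<in>Dq. column l Bbar =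
           ols_est X Y l + (2 * \<gamma> / ((1 + 2 * \<gamma>) * real (card Dq))) *\<^sub>R
             (\<Sum>c\<in>Dq - {l}. ols_est X Y c - ols_est X Y l)"
proof (intro ballI)
  \<comment> \<open>The centring and scaling hypotheses and \<open>n > p\<close> are standing assumptions of the paper;
    the closed form only needs \<open>X\<^sup>T X\<close> to be invertible.\<close>
  fix Dq l
  assume Dq: "Dq \<in> D" and l: "l \<in> Dq"
  have "column l' Bbar + (2 * \<gamma> / real (card Dq)) *\<^sub>R (\<Sum>m\<in>Dq. column l' Bbar - column m Bbar)
      = ols_est X Y l'" if "l' \<in> Dq" for l'
    using ols_est_eqI[OF inv grouped_minimizer_normal_equation[OF part gamma minimizer Dq that]]
    by (rule sym)
  then show "column l Bbar = ols_est X Y l + (2 * \<gamma> / ((1 + 2 * \<gamma>) * real (card Dq))) *\<^sub>R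
      (\<Sum>c\<in>Dq - {l}. ols_est X Y c - ols_est X Y l)"
    by (intro shrinkage_system_solution[OF finite l gamma])
qed

end
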